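(* Let $T=\operatorname{Th}(\mathbb{Z};+,<,0)$ (Presburger arithmetic), $\mathcal{U}$ a monster model of $T$ containing $\mathbb{Z}$ as an elementary submodel, and $\mu\in\mathfrak{M}_x(\mathcal{U})$, $\nu\in\mathfrak{M}_y(\mathcal{U})$ (one variable each). (1) If $\mu(x>b)=\nu(y>b)=1$ for every $b\in\mathcal{U}$, then $\mu\geq_{\mathbb{E},\mathbb{Z}}\nu$. (2) If $\mu(x<b)=\nu(y<b)=1$ for every $b\in\mathcal{U}$, then $\mu\geq_{\mathbb{E},\mathbb{Z}}\nu$.
   Context: For $C\subseteq\mathcal{U}$, $\mathcal{L}_x(C)$ is the Boolean algebra of formulas in $x$ with parameters from $C$ modulo $T$, embedded in $\mathcal{L}_{xy}(C)$ via $\varphi(x)\mapsto\varphi(x)\wedge y=y$; $\mathfrak{M}_x(C)$ is the set of finitely additive probability measures (Keisler measures) on $\mathcal{L}_x(C)$. For $\omega\in\mathfrak{M}_{xy}(C)$, $\pi_x(\omega)(\varphi(x))=\omega(\varphi(x)\wedge y=y)$ (similarly $\pi_y$); $\omega|_D$ is restriction. $\mu\geq_{\mathbb{E},\mathbb{Z}}\nu$ means there is $\lambda\in\mathfrak{M}_{xy}(\mathbb{Z})$ with $\pi_x(\lambda)=\mu|_{\mathbb{Z}}$ such that every $\omega\in\mathfrak{M}_{xy}(\mathcal{U})$ with $\omega|_{\mathbb{Z}}=\lambda$ and $\pi_x(\omega)=\mu$ satisfies $\pi_y(\omega)=\nu$. *)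

theory Defs
  imports Complex_Main
begin

datatype ptm = PVar nat | PZero | PPlus ptm ptm

datatype pfm = PEq ptm ptm | PLt ptm ptm | PNeg pfm | PConj pfm pfm | PEx nat pfm

text \<open>A structure for the language is given by an interpretation (pl, lt, z)
  of +, < and 0 on a universe type 'u; variable assignments are nat \<Rightarrow> 'u.\<close>

fun evalt :: "('u \<Rightarrow> 'u \<Rightarrow> 'u) \<Rightarrow> 'u \<Rightarrow> (nat \<Rightarrow> 'u) \<Rightarrow> ptm \<Rightarrow> 'u" where
  "evalt pl z v (PVar n) = v n"
| "evalt pl z v PZero = z"
| "evalt pl z v (PPlus s t) = pl (evalt pl z v s) (evalt pl z v t)"

fun sat :: "('u \<Rightarrow> 'u \<Rightarrow> 'u) \<Rightarrow> ('u \<Rightarrow> 'u \<Rightarrow> bool) \<Rightarrow> 'u \<Rightarrow> pfm \<Rightarrow> (nat \<Rightarrow> 'u) \<Rightarrow> bool" where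
  "sat pl lt z (PEq s t) v = (evalt pl z v s = evalt pl z v t)"
| "sat pl lt z (PLt s t) v = lt (evalt pl z v s) (evalt pl z v t)"
| "sat pl lt z (PNeg f) v = (\<not> sat pl lt z f v)"
| "sat pl lt z (PConj f g) v = (sat pl lt z f v \<and> sat pl lt z g v)"
| "sat pl lt z (PEx n f) v = (\<exists>a. sat pl lt z f (v(n := a)))"

definition elem_emb :: "('u \<Rightarrow> 'u \<Rightarrow> 'u) \<Rightarrow> ('u \<Rightarrow> 'u \<Rightarrow> bool) \<Rightarrow> 'u \<Rightarrow> (int \<Rightarrow> 'u) \<Rightarrow> bool" where
  "elem_emb pl lt z e \<longleftrightarrow> inj e \<and>
     (\<forall>\<phi> (v :: nat \<Rightarrow> int). sat (+) (<) 0 \<phi> v \<longleftrightarrow> sat pl lt z \<phi> (e \<circ> v))"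

text \<open>Saturation (monster model): every finitely satisfiable set of formulas in the
  variable x (= variable 0) with parameters from a set A of cardinality strictly less
  than that of the universe (no injection of the universe into A) is realized.\<close>

definition saturated :: "('u \<Rightarrow> 'u \<Rightarrow> 'u) \<Rightarrow> ('u \<Rightarrow> 'u \<Rightarrow> bool) \<Rightarrow> 'u \<Rightarrow> bool" where
  "saturated pl lt z \<longleftrightarrow>
     (\<forall>(A :: 'u set) (\<Phi> :: (pfm \<times> (nat \<Rightarrow> 'u)) set).
        \<not> (\<exists>f :: 'u \<Rightarrow> 'u. inj f \<and> range f \<subseteq> A) \<longrightarrow>
        (\<forall>(\<phi>, v) \<in> \<Phi>. \<forall>n. n \<noteq> 0 \<longrightarrow> v n \<in> A) \<longrightarrow>
        (\<forall>F \<subseteq> \<Phi>. finite F \<longrightarrow> (\<exists>a. \<forall>(\<phi>, v) \<in> F. sat pl lt z \<phi> (v(0 := a)))) \<longrightarrow>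
        (\<exists>a. \<forall>(\<phi>, v) \<in> \<Phi>. sat pl lt z \<phi> (v(0 := a))))"

section \<open>Definable sets: L_x(C) and L_xy(C) as Boolean algebras of C-definable sets\<close>

text \<open>x is variable 0, y is variable 1; all other variables are parameters from C.\<close>

definition def1 :: "('u \<Rightarrow> 'u \<Rightarrow> 'u) \<Rightarrow> ('u \<Rightarrow> 'u \<Rightarrow> bool) \<Rightarrow> 'u \<Rightarrow> 'u set \<Rightarrow> 'u set set" where
  "def1 pl lt z C = {{a. sat pl lt z \<phi> (v(0 := a))} | \<phi> v. \<forall>n. n \<noteq> 0 \<longrightarrow> v n \<in> C}"

definition def2 :: "('u \<Rightarrow> 'u \<Rightarrow> 'u) \<Rightarrow> ('u \<Rightarrow> 'u \<Rightarrow> bool) \<Rightarrow> 'u \<Rightarrow> 'u set \<Rightarrow> ('u \<times> 'u) set set" where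
  "def2 pl lt z C = {{(a, b). sat pl lt z \<phi> (v(0 := a, 1 := b))} | \<phi> v.
                       \<forall>n. n \<noteq> 0 \<and> n \<noteq> 1 \<longrightarrow> v n \<in> C}"

text \<open>Keisler measure on a Boolean algebra B of sets (values outside B are irrelevant).\<close>

definition keisler :: "'a set set \<Rightarrow> ('a set \<Rightarrow> real) \<Rightarrow> bool" where
  "keisler B m \<longleftrightarrow> (\<forall>D \<in> B. 0 \<le> m D) \<and> m UNIV = 1 \<and>
     (\<forall>D \<in> B. \<forall>E \<in> B. D \<inter> E = {} \<longrightarrow> m (D \<union> E) = m D + m E)"

text \<open>mu \<ge>_{E,Z} nu, where Zs is the (image of the) elementary submodel Z.
  pi_x(omega)(D) = omega(D \<times> UNIV), pi_y(omega)(D) = omega(UNIV \<times> D).\<close>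

definition geEZ :: "('u \<Rightarrow> 'u \<Rightarrow> 'u) \<Rightarrow> ('u \<Rightarrow> 'u \<Rightarrow> bool) \<Rightarrow> 'u \<Rightarrow> 'u set \<Rightarrow>
                    ('u set \<Rightarrow> real) \<Rightarrow> ('u set \<Rightarrow> real) \<Rightarrow> bool" where
  "geEZ pl lt z Zs \<mu> \<nu> \<longleftrightarrow>
     (\<exists>lam. keisler (def2 pl lt z Zs) lam \<and>
        (\<forall>D \<in> def1 pl lt z Zs. lam (D \<times> UNIV) = \<mu> D) \<and>
        (\<forall>\<omega>. keisler (def2 pl lt z UNIV) \<omega> \<longrightarrow>
              (\<forall>E \<in> def2 pl lt z Zs. \<omega> E = lam E) \<longrightarrow>
              (\<forall>D \<in> def1 pl lt z UNIV. \<omega> (D \<times> UNIV) = \<mu> D) \<longrightarrow>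
              (\<forall>D \<in> def1 pl lt z UNIV. \<omega> (UNIV \<times> D) = \<nu> D)))"

end

theory Submission
  imports Defs "HOL-Analysis.Sigma_Algebra" "HOL-Decision_Procs.Cooper"
begin

text \<open>
  Write \<open>x \<prec> y\<close> for \<open>x < y\<close> in part (1) and for \<open>y < x\<close> in part (2); the hypotheses say that
  \<open>\<mu>\<close> and \<open>\<nu>\<close> live beyond every point in the direction of \<open>\<prec>\<close>.

  By Cooper's quantifier elimination, every formula \<open>\<phi>(y)\<close> over \<open>\<int>\<close> is eventually periodic in \<open>y\<close>,
  with a period \<open>N\<close> that does not depend on the parameters. This is a first-order statement,
  so it holds in \<open>\<U>\<close>: every \<open>\<U>\<close>-definable set agrees, beyond some point, with a union \<open>R\<close> of residue
  classes modulo \<open>N\<close> with standard representatives \<open>0, \<dots>, N - 1\<close>, a \<open>\<int>\<close>-definable set.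
  Consequently \<open>a \<mapsto> \<nu>(S\<^sub>a)\<close> is a simple function for every definable \<open>S\<close>, and
  \<open>\<lambda>(S) = \<integral> \<nu>(S\<^sub>a) d\<mu>(a)\<close> is a Keisler measure with \<open>x\<close>-marginal \<open>\<mu>\<close> and \<open>\<lambda>(x \<prec> y) = 1\<close>.
  If \<open>\<omega>\<close> extends \<open>\<lambda>\<close> and has \<open>x\<close>-marginal \<open>\<mu>\<close>, then \<open>\<omega>(x \<prec> y) = 1\<close> and \<open>\<omega>(c \<prec> x) = 1\<close>
  force \<open>\<omega>(c \<prec> y) = 1\<close> for all \<open>c\<close>; hence for definable \<open>D\<close> with associated \<open>R\<close>,
  \<open>\<omega>(y \<in> D) = \<omega>(y \<in> R) = \<lambda>(y \<in> R) = \<nu>(R) = \<nu>(D)\<close>.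
\<close>

definition PTrue :: pfm where "PTrue = PEq PZero PZero"
definition PImp :: "pfm \<Rightarrow> pfm \<Rightarrow> pfm" where "PImp f g = PNeg (PConj f (PNeg g))"
definition PDisj :: "pfm \<Rightarrow> pfm \<Rightarrow> pfm" where "PDisj f g = PNeg (PConj (PNeg f) (PNeg g))"
definition PAll :: "nat \<Rightarrow> pfm \<Rightarrow> pfm" where "PAll n f = PNeg (PEx n (PNeg f))"

fun PConjs :: "pfm list \<Rightarrow> pfm" where
  "PConjs [] = PTrue"
| "PConjs (f # fs) = PConj f (PConjs fs)"

definition PDisjs :: "pfm list \<Rightarrow> pfm" where "PDisjs fs = PNeg (PConjs (map PNeg fs))"

fun PAlls :: "nat list \<Rightarrow> pfm \<Rightarrow> pfm" where
  "PAlls [] f = f"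
| "PAlls (n # ns) f = PAll n (PAlls ns f)"

fun PTimes :: "nat \<Rightarrow> ptm \<Rightarrow> ptm" where
  "PTimes 0 t = PZero"
| "PTimes (Suc n) t = PPlus t (PTimes n t)"

fun nsmult :: "('u \<Rightarrow> 'u \<Rightarrow> 'u) \<Rightarrow> 'u \<Rightarrow> nat \<Rightarrow> 'u \<Rightarrow> 'u" where
  "nsmult pl z 0 x = z"
| "nsmult pl z (Suc n) x = pl x (nsmult pl z n x)"

(* \<open>d = True\<close> gives the order of part (1), \<open>d = False\<close> its reverse for part (2). *)
definition dir_less :: "('u \<Rightarrow> 'u \<Rightarrow> bool) \<Rightarrow> bool \<Rightarrow> 'u \<Rightarrow> 'u \<Rightarrow> bool" where
  "dir_less lt d a b \<longleftrightarrow> (if d then lt a b else lt b a)"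

definition PDirLess :: "bool \<Rightarrow> nat \<Rightarrow> nat \<Rightarrow> pfm" where
  "PDirLess d i j = (if d then PLt (PVar i) (PVar j) else PLt (PVar j) (PVar i))"

definition mod_class :: "('u \<Rightarrow> 'u \<Rightarrow> 'u) \<Rightarrow> 'u \<Rightarrow> nat \<Rightarrow> 'u \<Rightarrow> 'u set" where
  "mod_class pl z N r = range (\<lambda>s. pl (nsmult pl z N s) r)"

definition PCong :: "nat \<Rightarrow> nat \<Rightarrow> nat \<Rightarrow> nat \<Rightarrow> pfm" where
  "PCong N i t r = PEx t (PEq (PVar i) (PPlus (PTimes N (PVar t)) (PVar r)))"

lemma sat_PTrue [simp]: "sat pl lt z PTrue v"
  by (simp add: PTrue_def)

lemma sat_PImp [simp]: "sat pl lt z (PImp f g) v \<longleftrightarrow> (sat pl lt z f v \<longrightarrow> sat pl lt z g v)"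
  by (simp add: PImp_def)

lemma sat_PDisj [simp]: "sat pl lt z (PDisj f g) v \<longleftrightarrow> sat pl lt z f v \<or> sat pl lt z g v"
  by (simp add: PDisj_def)

lemma sat_PAll [simp]: "sat pl lt z (PAll n f) v \<longleftrightarrow> (\<forall>a. sat pl lt z f (v(n := a)))"
  by (simp add: PAll_def)

lemma sat_PConjs [simp]: "sat pl lt z (PConjs fs) v \<longleftrightarrow> (\<forall>f\<in>set fs. sat pl lt z f v)"
  by (induct fs) auto

lemma sat_PDisjs [simp]: "sat pl lt z (PDisjs fs) v \<longleftrightarrow> (\<exists>f\<in>set fs. sat pl lt z f v)"
  by (simp add: PDisjs_def)

lemma sat_PAlls:
  "sat pl lt z (PAlls ns f) v \<longleftrightarrow> (\<forall>u. (\<forall>k. k \<notin> set ns \<longrightarrow> u k = v k) \<longrightarrow> sat pl lt z f u)"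
proof (induct ns arbitrary: v)
  case Nil
  then show ?case by auto
next
  case (Cons n ns)
  show ?case
  proof
    assume "sat pl lt z (PAlls (n # ns) f) v"
    then show "\<forall>u. (\<forall>k. k \<notin> set (n # ns) \<longrightarrow> u k = v k) \<longrightarrow> sat pl lt z f u"
      by (simp add: Cons) metis
  next
    assume "\<forall>u. (\<forall>k. k \<notin> set (n # ns) \<longrightarrow> u k = v k) \<longrightarrow> sat pl lt z f u"
    then show "sat pl lt z (PAlls (n # ns) f) v"
      by (auto simp: Cons)
  qed
qed

lemma evalt_PTimes [simp]: "evalt pl z v (PTimes N t) = nsmult pl z N (evalt pl z v t)"
  by (induct N) auto

lemma nsmult_int [simp]: "nsmult (+) 0 N (x :: int) = int N * x"
  by (induct N) (auto simp: algebra_simps)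

lemma sat_PDirLess [simp]: "sat pl lt z (PDirLess d i j) v \<longleftrightarrow> dir_less lt d (v i) (v j)"
  by (simp add: PDirLess_def dir_less_def)

lemma sat_PCong [simp]:
  "t \<noteq> i \<Longrightarrow> t \<noteq> r \<Longrightarrow> sat pl lt z (PCong N i t r) v \<longleftrightarrow> v i \<in> mod_class pl z N (v r)"
  by (auto simp: PCong_def mod_class_def)

lemma mod_class_int: "mod_class (+) 0 N (r :: int) = {y. int N dvd y - r}"
  by (auto simp: mod_class_def dvd_def algebra_simps)

fun tm_bound :: "ptm \<Rightarrow> nat" where
  "tm_bound (PVar n) = Suc n"
| "tm_bound PZero = 0"
| "tm_bound (PPlus s t) = max (tm_bound s) (tm_bound t)"

fun fm_bound :: "pfm \<Rightarrow> nat" where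
  "fm_bound (PEq s t) = max (tm_bound s) (tm_bound t)"
| "fm_bound (PLt s t) = max (tm_bound s) (tm_bound t)"
| "fm_bound (PNeg f) = fm_bound f"
| "fm_bound (PConj f g) = max (fm_bound f) (fm_bound g)"
| "fm_bound (PEx n f) = max (Suc n) (fm_bound f)"

lemma evalt_cong: "\<forall>k<tm_bound t. v k = w k \<Longrightarrow> evalt pl z v t = evalt pl z w t"
  by (induct t) auto

lemma sat_cong: "\<forall>k<fm_bound f. v k = w k \<Longrightarrow> sat pl lt z f v \<longleftrightarrow> sat pl lt z f w"
proof (induct f arbitrary: v w)
  case (PEq s t)
  then show ?case using evalt_cong[of s v w] evalt_cong[of t v w] by auto
next
  case (PLt s t)
  then show ?case using evalt_cong[of s v w] evalt_cong[of t v w] by auto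
next
  case (PNeg f)
  then show ?case by auto
next
  case (PConj f g)
  have "sat pl lt z f v \<longleftrightarrow> sat pl lt z f w"
    by (rule PConj.hyps(1)) (use PConj.prems in auto)
  moreover have "sat pl lt z g v \<longleftrightarrow> sat pl lt z g w"
    by (rule PConj.hyps(2)) (use PConj.prems in auto)
  ultimately show ?case by simp
next
  case (PEx n f)
  have "sat pl lt z f (v(n := a)) \<longleftrightarrow> sat pl lt z f (w(n := a))" for a
    by (rule PEx.hyps) (use PEx.prems in auto)
  then show ?case by simp
qed

fun rename_tm :: "(nat \<Rightarrow> nat) \<Rightarrow> ptm \<Rightarrow> ptm" where
  "rename_tm \<sigma> (PVar n) = PVar (\<sigma> n)"
| "rename_tm \<sigma> PZero = PZero"
| "rename_tm \<sigma> (PPlus s t) = PPlus (rename_tm \<sigma> s) (rename_tm \<sigma> t)"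

fun rename :: "(nat \<Rightarrow> nat) \<Rightarrow> pfm \<Rightarrow> pfm" where
  "rename \<sigma> (PEq s t) = PEq (rename_tm \<sigma> s) (rename_tm \<sigma> t)"
| "rename \<sigma> (PLt s t) = PLt (rename_tm \<sigma> s) (rename_tm \<sigma> t)"
| "rename \<sigma> (PNeg f) = PNeg (rename \<sigma> f)"
| "rename \<sigma> (PConj f g) = PConj (rename \<sigma> f) (rename \<sigma> g)"
| "rename \<sigma> (PEx n f) = PEx (\<sigma> n) (rename \<sigma> f)"

lemma evalt_rename_tm: "evalt pl z v (rename_tm \<sigma> t) = evalt pl z (v \<circ> \<sigma>) t"
  by (induct t) auto

lemma sat_rename: "inj \<sigma> \<Longrightarrow> sat pl lt z (rename \<sigma> f) v \<longleftrightarrow> sat pl lt z f (v \<circ> \<sigma>)"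
proof (induct f arbitrary: v)
  case (PEx n f)
  have upd: "v(\<sigma> n := a) \<circ> \<sigma> = (v \<circ> \<sigma>)(n := a)" for a
    using PEx.prems by (auto simp: fun_eq_iff inj_eq)
  have "sat pl lt z (rename \<sigma> (PEx n f)) v \<longleftrightarrow> (\<exists>a. sat pl lt z f (v(\<sigma> n := a) \<circ> \<sigma>))"
    by (simp only: rename.simps sat.simps PEx.hyps[OF PEx.prems])
  also have "\<dots> \<longleftrightarrow> sat pl lt z (PEx n f) (v \<circ> \<sigma>)"
    by (simp only: upd sat.simps)
  finally show ?case .
qed (auto simp: evalt_rename_tm)

lemma conj_merge_params:
  fixes j :: nat
  shows "\<exists>h u. (\<forall>n\<ge>j. u n \<in> v ` {j..} \<union> w ` {j..}) \<and>
    (\<forall>p. sat pl lt z h (override_on u p {..<j}) \<longleftrightarrow>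
           sat pl lt z f (override_on v p {..<j}) \<and> sat pl lt z g (override_on w p {..<j}))"
proof -
  \<comment> \<open>The parameters of \<open>g\<close> are moved past all variables of \<open>f\<close>.\<close>
  define L where "L = max j (fm_bound f)"
  define \<sigma> where "\<sigma> n = (if n < j then n else n + (L - j))" for n
  define u where "u n = (if n < L then v n else w (n - (L - j)))" for n
  have "j \<le> L" by (simp add: L_def)
  have "u n \<in> v ` {j..} \<union> w ` {j..}" if "j \<le> n" for n
  proof (cases "n < L")
    case True
    then show ?thesis using \<open>j \<le> n\<close> by (simp add: u_def)
  next
    case False
    then have "n - (L - j) \<in> {j..}" using \<open>j \<le> L\<close> by simp
    then show ?thesis using False by (simp add: u_def)
  qed
  moreover have "inj \<sigma>"
  proof (rule injI)
    fix m n assume "\<sigma> m = \<sigma> n"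
    then show "m = n"
      using \<open>j \<le> L\<close> by (simp add: \<sigma>_def split: if_splits)
  qed
  moreover have "override_on u p {..<j} \<circ> \<sigma> = override_on w p {..<j}" for p
  proof
    fix n
    show "(override_on u p {..<j} \<circ> \<sigma>) n = override_on w p {..<j} n"
    proof (cases "n < j")
      case True
      then show ?thesis by (simp add: override_on_def \<sigma>_def)
    next
      case False
      then have "\<sigma> n = n + (L - j)" "\<not> n + (L - j) < j" "\<not> n + (L - j) < L"
        using \<open>j \<le> L\<close> by (auto simp: \<sigma>_def)
      then show ?thesis using False by (simp add: override_on_def u_def)
    qed
  qed
  moreover have "sat pl lt z f (override_on u p {..<j}) \<longleftrightarrow> sat pl lt z f (override_on v p {..<j})" for p
    by (rule sat_cong) (simp add: override_on_def u_def L_def)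
  ultimately show ?thesis
    by (intro exI[of _ "PConj f (rename \<sigma> g)"] exI[of _ u]) (simp add: sat_rename)
qed

lemma def1I: "(\<And>n. n \<noteq> 0 \<Longrightarrow> v n \<in> Cs) \<Longrightarrow> {a. sat pl lt z f (v(0 := a))} \<in> def1 pl lt z Cs"
  unfolding def1_def by blast

lemma def2I:
  "(\<And>n. n \<noteq> 0 \<Longrightarrow> n \<noteq> 1 \<Longrightarrow> v n \<in> Cs) \<Longrightarrow>
    {(a, b). sat pl lt z f (v(0 := a, 1 := b))} \<in> def2 pl lt z Cs"
  unfolding def2_def by blast

lemma def1E:
  assumes "D \<in> def1 pl lt z Cs"
  obtains f v where "\<And>n. n \<noteq> 0 \<Longrightarrow> v n \<in> Cs" "D = {a. sat pl lt z f (v(0 := a))}"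
  using assms unfolding def1_def by blast

lemma def2E:
  assumes "D \<in> def2 pl lt z Cs"
  obtains f v where "\<And>n. n \<noteq> 0 \<Longrightarrow> n \<noteq> 1 \<Longrightarrow> v n \<in> Cs"
    "D = {(a, b). sat pl lt z f (v(0 := a, 1 := b))}"
  using assms unfolding def2_def by blast

lemma def1_mono: "D \<in> def1 pl lt z Cs \<Longrightarrow> Cs \<subseteq> Cs' \<Longrightarrow> D \<in> def1 pl lt z Cs'"
  unfolding def1_def by blast

lemma def2_mono: "D \<in> def2 pl lt z Cs \<Longrightarrow> Cs \<subseteq> Cs' \<Longrightarrow> D \<in> def2 pl lt z Cs'"
  unfolding def2_def by blast

lemma def1_UNIV: "c \<in> Cs \<Longrightarrow> UNIV \<in> def1 pl lt z Cs"
  using def1I[of "\<lambda>_. c" Cs pl lt z PTrue] by simp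

lemma def2_UNIV: "c \<in> Cs \<Longrightarrow> UNIV \<in> def2 pl lt z Cs"
  using def2I[of "\<lambda>_. c" Cs pl lt z PTrue] by simp

lemma def1_Compl:
  assumes "D \<in> def1 pl lt z Cs"
  shows "- D \<in> def1 pl lt z Cs"
proof -
  obtain f v where v: "\<And>n. n \<noteq> 0 \<Longrightarrow> v n \<in> Cs" and "D = {a. sat pl lt z f (v(0 := a))}"
    using assms by (blast elim: def1E)
  then have "- D = {a. sat pl lt z (PNeg f) (v(0 := a))}"
    by auto
  also have "\<dots> \<in> def1 pl lt z Cs"
    by (rule def1I) (rule v)
  finally show ?thesis .
qed

lemma def2_Compl:
  assumes "D \<in> def2 pl lt z Cs"
  shows "- D \<in> def2 pl lt z Cs"
proof -
  obtain f v where v: "\<And>n. n \<noteq> 0 \<Longrightarrow> n \<noteq> 1 \<Longrightarrow> v n \<in> Cs"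
    and "D = {(a, b). sat pl lt z f (v(0 := a, 1 := b))}"
    using assms by (blast elim: def2E)
  then have "- D = {(a, b). sat pl lt z (PNeg f) (v(0 := a, 1 := b))}"
    by auto
  also have "\<dots> \<in> def2 pl lt z Cs"
    by (rule def2I) (rule v)
  finally show ?thesis .
qed

lemma override_on_lessThan_1: "override_on v p {..<1 :: nat} = v(0 := p 0)"
  by (auto simp: fun_eq_iff override_on_def)

lemma override_on_lessThan_2: "override_on v p {..<2 :: nat} = v(0 := p 0, 1 := p 1)"
  by (auto simp: fun_eq_iff override_on_def)

lemma def1_Int:
  assumes "D \<in> def1 pl lt z Cs" "D' \<in> def1 pl lt z Cs"
  shows "D \<inter> D' \<in> def1 pl lt z Cs"
proof -
  obtain f v where v: "\<And>n. n \<noteq> 0 \<Longrightarrow> v n \<in> Cs" and D: "D = {a. sat pl lt z f (v(0 := a))}"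
    using assms(1) by (blast elim: def1E)
  obtain g w where w: "\<And>n. n \<noteq> 0 \<Longrightarrow> w n \<in> Cs" and D': "D' = {a. sat pl lt z g (w(0 := a))}"
    using assms(2) by (blast elim: def1E)
  obtain h u where u: "\<forall>n\<ge>1. u n \<in> v ` {1..} \<union> w ` {1..}"
    and h: "\<forall>p. sat pl lt z h (override_on u p {..<1}) \<longleftrightarrow>
               sat pl lt z f (override_on v p {..<1}) \<and> sat pl lt z g (override_on w p {..<1})"
    using conj_merge_params[of 1 v w pl lt z f g] by blast
  have "a \<in> D \<inter> D' \<longleftrightarrow> sat pl lt z h (u(0 := a))" for a
    using h[rule_format, of "\<lambda>_. a"] unfolding override_on_lessThan_1 by (simp add: D D')
  then have "D \<inter> D' = {a. sat pl lt z h (u(0 := a))}"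
    by auto
  also have "\<dots> \<in> def1 pl lt z Cs"
  proof (rule def1I)
    fix n :: nat assume "n \<noteq> 0"
    then have "u n \<in> v ` {1..} \<union> w ` {1..}" using u by simp
    moreover have "v ` {1..} \<union> w ` {1..} \<subseteq> Cs" using v w by auto
    ultimately show "u n \<in> Cs" by blast
  qed
  finally show ?thesis .
qed

lemma def2_Int:
  assumes "D \<in> def2 pl lt z Cs" "D' \<in> def2 pl lt z Cs"
  shows "D \<inter> D' \<in> def2 pl lt z Cs"
proof -
  obtain f v where v: "\<And>n. n \<noteq> 0 \<Longrightarrow> n \<noteq> 1 \<Longrightarrow> v n \<in> Cs"
    and D: "D = {(a, b). sat pl lt z f (v(0 := a, 1 := b))}"
    using assms(1) by (blast elim: def2E)
  obtain g w where w: "\<And>n. n \<noteq> 0 \<Longrightarrow> n \<noteq> 1 \<Longrightarrow> w n \<in> Cs"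
    and D': "D' = {(a, b). sat pl lt z g (w(0 := a, 1 := b))}"
    using assms(2) by (blast elim: def2E)
  obtain h u where u: "\<forall>n\<ge>2. u n \<in> v ` {2..} \<union> w ` {2..}"
    and h: "\<forall>p. sat pl lt z h (override_on u p {..<2}) \<longleftrightarrow>
               sat pl lt z f (override_on v p {..<2}) \<and> sat pl lt z g (override_on w p {..<2})"
    using conj_merge_params[of 2 v w pl lt z f g] by blast
  have "(a, b) \<in> D \<inter> D' \<longleftrightarrow> sat pl lt z h (u(0 := a, 1 := b))" for a b
    using h[rule_format, of "\<lambda>n. if n = 0 then a else b"] unfolding override_on_lessThan_2
    by (simp add: D D')
  then have "D \<inter> D' = {(a, b). sat pl lt z h (u(0 := a, 1 := b))}"
    by auto
  also have "\<dots> \<in> def2 pl lt z Cs"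
  proof (rule def2I)
    fix n :: nat assume "n \<noteq> 0" "n \<noteq> 1"
    then have "u n \<in> v ` {2..} \<union> w ` {2..}" using u by (simp add: numeral_2_eq_2)
    moreover have "v ` {2..} \<union> w ` {2..} \<subseteq> Cs" using v w by auto
    ultimately show "u n \<in> Cs" by blast
  qed
  finally show ?thesis .
qed

lemma algebra_def1:
  assumes "c \<in> Cs"
  shows "algebra UNIV (def1 pl lt z Cs)"
  unfolding algebra_iff_Int
proof (intro conjI ballI)
  show "{} \<in> def1 pl lt z Cs"
    using def1_Compl[OF def1_UNIV[OF assms]] by simp
  show "UNIV - D \<in> def1 pl lt z Cs" if "D \<in> def1 pl lt z Cs" for D
    using def1_Compl[OF that] by (simp add: Compl_eq_Diff_UNIV)
qed (auto intro: def1_Int)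

lemma algebra_def2:
  assumes "c \<in> Cs"
  shows "algebra UNIV (def2 pl lt z Cs)"
  unfolding algebra_iff_Int
proof (intro conjI ballI)
  show "{} \<in> def2 pl lt z Cs"
    using def2_Compl[OF def2_UNIV[OF assms]] by simp
  show "UNIV - D \<in> def2 pl lt z Cs" if "D \<in> def2 pl lt z Cs" for D
    using def2_Compl[OF that] by (simp add: Compl_eq_Diff_UNIV)
qed (auto intro: def2_Int)

lemma def1_cylinder_x:
  assumes "D \<in> def1 pl lt z Cs"
  shows "D \<times> UNIV \<in> def2 pl lt z Cs"
proof -
  obtain f v where v: "\<And>n. n \<noteq> 0 \<Longrightarrow> v n \<in> Cs" and D: "D = {a. sat pl lt z f (v(0 := a))}"
    using assms by (blast elim: def1E)
  define \<sigma> where "\<sigma> n = (if n = 0 then 0 else Suc n)" for n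
  have "inj \<sigma>" by (auto simp: inj_def \<sigma>_def)
  moreover have "(\<lambda>n. v (n - 1))(0 := a, 1 := b) \<circ> \<sigma> = v(0 := a)" for a b
    by (auto simp: fun_eq_iff \<sigma>_def)
  ultimately have "D \<times> UNIV = {(a, b). sat pl lt z (rename \<sigma> f) ((\<lambda>n. v (n - 1))(0 := a, 1 := b))}"
    by (auto simp: D sat_rename)
  moreover have "v (n - 1) \<in> Cs" if "n \<noteq> 0" "n \<noteq> 1" for n
    using v that by simp
  ultimately show ?thesis using def2I[of "\<lambda>n. v (n - 1)"] by simp
qed

lemma def1_cylinder_y:
  assumes "D \<in> def1 pl lt z Cs"
  shows "UNIV \<times> D \<in> def2 pl lt z Cs"
proof -
  obtain f v where v: "\<And>n. n \<noteq> 0 \<Longrightarrow> v n \<in> Cs" and D: "D = {a. sat pl lt z f (v(0 := a))}"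
    using assms by (blast elim: def1E)
  define \<sigma> where "\<sigma> n = (if n = 0 then 1 else Suc n)" for n
  have "inj \<sigma>" by (auto simp: inj_def \<sigma>_def)
  moreover have "(\<lambda>n. v (n - 1))(0 := a, 1 := b) \<circ> \<sigma> = v(0 := b)" for a b
    by (auto simp: fun_eq_iff \<sigma>_def)
  ultimately have "UNIV \<times> D = {(a, b). sat pl lt z (rename \<sigma> f) ((\<lambda>n. v (n - 1))(0 := a, 1 := b))}"
    by (auto simp: D sat_rename)
  moreover have "v (n - 1) \<in> Cs" if "n \<noteq> 0" "n \<noteq> 1" for n
    using v that by simp
  ultimately show ?thesis using def2I[of "\<lambda>n. v (n - 1)"] by simp
qed

lemma def1_dir_less: "{b. dir_less lt d c b} \<in> def1 pl lt z Cs" if "c \<in> Cs"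
  using def1I[of "\<lambda>_. c" Cs pl lt z "PDirLess d 1 0"] that by simp

lemma def2_dir_less: "{(a, b). dir_less lt d a b} \<in> def2 pl lt z Cs" if "c \<in> Cs"
  using def2I[of "\<lambda>_. c" Cs pl lt z "PDirLess d 0 1"] that by simp

lemma def2_sections:
  assumes "S \<in> def2 pl lt z Cs"
  obtains g w where "\<And>n. n \<noteq> 0 \<Longrightarrow> n \<noteq> 1 \<Longrightarrow> w n \<in> Cs"
    and "\<And>a. {b. (a, b) \<in> S} = {b. sat pl lt z g ((w(1 := a))(0 := b))}"
proof -
  obtain f v where v: "\<And>n. n \<noteq> 0 \<Longrightarrow> n \<noteq> 1 \<Longrightarrow> v n \<in> Cs"
    and S: "S = {(a, b). sat pl lt z f (v(0 := a, 1 := b))}"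
    using assms by (blast elim: def2E)
  define \<sigma> :: "nat \<Rightarrow> nat" where "\<sigma> n = (if n = 0 then 1 else if n = 1 then 0 else n)" for n
  have "inj \<sigma>" by (auto simp: inj_def \<sigma>_def)
  moreover have "(v \<circ> \<sigma>)(1 := a, 0 := b) \<circ> \<sigma> = v(0 := a, 1 := b)" for a b
    by (auto simp: fun_eq_iff \<sigma>_def)
  ultimately have "{b. (a, b) \<in> S} = {b. sat pl lt z (rename \<sigma> f) (((v \<circ> \<sigma>)(1 := a))(0 := b))}" for a
    by (simp add: S sat_rename)
  moreover have "(v \<circ> \<sigma>) n \<in> Cs" if "n \<noteq> 0" "n \<noteq> 1" for n
    using v that by (simp add: \<sigma>_def)
  ultimately show ?thesis by (rule that[of "v \<circ> \<sigma>" "rename \<sigma> f", rotated])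
qed

lemma def2_section:
  assumes "S \<in> def2 pl lt z Cs"
  shows "{b. (a, b) \<in> S} \<in> def1 pl lt z (insert a Cs)"
proof (rule def2_sections[OF assms])
  fix g w
  assume w: "\<And>n. n \<noteq> 0 \<Longrightarrow> n \<noteq> 1 \<Longrightarrow> w n \<in> Cs"
    and sections: "\<And>a. {b. (a, b) \<in> S} = {b. sat pl lt z g ((w(1 := a))(0 := b))}"
  have "(w(1 := a)) n \<in> insert a Cs" if "n \<noteq> 0" for n
    using w that by simp
  then show ?thesis
    unfolding sections by (rule def1I)
qed

section \<open>Keisler measures and integrals of simple functions\<close>

lemma keisler_marginal_y:
  assumes "keisler (def2 pl lt z Cs) \<omega>"
  shows "keisler (def1 pl lt z Cs) (\<lambda>D. \<omega> (UNIV \<times> D))"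
  unfolding keisler_def
proof (intro conjI ballI impI)
  fix D assume "D \<in> def1 pl lt z Cs"
  then have "UNIV \<times> D \<in> def2 pl lt z Cs" by (rule def1_cylinder_y)
  then show "0 \<le> \<omega> (UNIV \<times> D)"
    using assms unfolding keisler_def by blast
next
  show "\<omega> (UNIV \<times> UNIV) = 1"
    using assms unfolding keisler_def by simp
next
  fix D D' assume D: "D \<in> def1 pl lt z Cs" and D': "D' \<in> def1 pl lt z Cs" and "D \<inter> D' = {}"
  have disj: "(UNIV \<times> D) \<inter> (UNIV \<times> D') = {}"
    using \<open>D \<inter> D' = {}\<close> by auto
  have eq: "UNIV \<times> (D \<union> D') = (UNIV \<times> D) \<union> (UNIV \<times> D')" by auto
  show "\<omega> (UNIV \<times> (D \<union> D')) = \<omega> (UNIV \<times> D) + \<omega> (UNIV \<times> D')"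
    unfolding eq using assms def1_cylinder_y[OF D] def1_cylinder_y[OF D'] disj
    unfolding keisler_def by blast
qed

lemma keisler_subalgebra: "keisler B m \<Longrightarrow> B' \<subseteq> B \<Longrightarrow> keisler B' m"
  unfolding keisler_def by blast

locale keisler_measure = algebra "UNIV :: 'a set" B for B :: "'a set set" +
  fixes m :: "'a set \<Rightarrow> real"
  assumes keisler: "keisler B m"
begin

lemma Compl_in_sets: "D \<in> B \<Longrightarrow> - D \<in> B"
  using compl_sets by (simp add: Compl_eq_Diff_UNIV)

lemma measure_nonneg: "D \<in> B \<Longrightarrow> 0 \<le> m D"
  using keisler by (simp add: keisler_def)

lemma measure_UNIV [simp]: "m UNIV = 1"
  using keisler by (simp add: keisler_def)

lemma measure_additive: "D \<in> B \<Longrightarrow> D' \<in> B \<Longrightarrow> D \<inter> D' = {} \<Longrightarrow> m (D \<union> D') = m D + m D'"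
  using keisler by (simp add: keisler_def)

lemma measure_empty [simp]: "m {} = 0"
  using measure_additive[of "{}" "{}"] by simp

lemma measure_split: "D \<in> B \<Longrightarrow> S \<in> B \<Longrightarrow> m D = m (D \<inter> S) + m (D - S)"
  using measure_additive[of "D \<inter> S" "D - S"] by (auto simp: Int_Diff_Un)

lemma measure_mono: "D \<in> B \<Longrightarrow> D' \<in> B \<Longrightarrow> D \<subseteq> D' \<Longrightarrow> m D \<le> m D'"
  using measure_split[of D' D] measure_nonneg[of "D' - D"] Diff[of D' D] by (simp add: Int_absorb1)

lemma measure_le_1: "D \<in> B \<Longrightarrow> m D \<le> 1"
  using measure_mono[of D UNIV] by simp

lemma measure_Int_full: "S \<in> B \<Longrightarrow> m S = 1 \<Longrightarrow> D \<in> B \<Longrightarrow> m (D \<inter> S) = m D"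
proof -
  assume S: "S \<in> B" "m S = 1" and D: "D \<in> B"
  have "m (D - S) \<le> m (UNIV - S)"
    using S D by (intro measure_mono) auto
  also have "m (UNIV - S) = 0"
    using measure_split[of UNIV S] S by simp
  finally show ?thesis
    using measure_split[OF D S(1)] measure_nonneg[of "D - S"] S D by auto
qed

lemma measure_eq_on_full:
  "S \<in> B \<Longrightarrow> m S = 1 \<Longrightarrow> D \<in> B \<Longrightarrow> D' \<in> B \<Longrightarrow> D \<inter> S = D' \<inter> S \<Longrightarrow> m D = m D'"
  by (metis measure_Int_full)

lemma measure_finite_UN:
  "finite I \<Longrightarrow> (\<And>i. i \<in> I \<Longrightarrow> X i \<in> B) \<Longrightarrow> disjoint_family_on X I \<Longrightarrow>
    m (\<Union>i\<in>I. X i) = (\<Sum>i\<in>I. m (X i))"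
proof (induct I rule: finite_induct)
  case (insert i I)
  have "X i \<inter> (\<Union>j\<in>I. X j) = {}"
    using insert.hyps(2) insert.prems(2) by (auto simp: disjoint_family_on_def)
  moreover have "disjoint_family_on X I"
    using insert.prems(2) by (rule disjoint_family_on_mono[rotated]) auto
  ultimately show ?case
    using insert by (simp add: measure_additive finite_UN)
qed simp

definition simple_function :: "('a \<Rightarrow> real) \<Rightarrow> bool" where
  "simple_function f \<longleftrightarrow> finite (range f) \<and> (\<forall>r. f -` {r} \<in> B)"

definition simple_integral :: "('a \<Rightarrow> real) \<Rightarrow> real" where
  "simple_integral f = (\<Sum>r\<in>range f. r * m (f -` {r}))"

lemma simple_integral_partition:
  assumes I: "finite I" and X: "\<And>i. i \<in> I \<Longrightarrow> X i \<in> B" and disj: "disjoint_family_on X I"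
    and cover: "(\<Union>i\<in>I. X i) = UNIV" and c: "\<And>i a. i \<in> I \<Longrightarrow> a \<in> X i \<Longrightarrow> f a = c i"
  shows "simple_integral f = (\<Sum>i\<in>I. c i * m (X i))"
proof -
  define J where "J = {i \<in> I. X i \<noteq> {}}"
  have J: "finite J" "J \<subseteq> I" using I by (auto simp: J_def)
  have "range f \<subseteq> c ` J"
  proof
    fix r assume "r \<in> range f"
    then obtain a i where "r = f a" "i \<in> I" "a \<in> X i" using cover by blast
    then show "r \<in> c ` J" using c by (auto simp: J_def)
  qed
  moreover have "c ` J \<subseteq> range f"
  proof
    fix r assume "r \<in> c ` J"
    then obtain i a where "i \<in> I" "a \<in> X i" "r = c i" by (auto simp: J_def)
    then have "r = f a" using c by simp
    then show "r \<in> range f" by simp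
  qed
  ultimately have range: "range f = c ` J" by blast
  have level: "f -` {r} = (\<Union>i\<in>{i\<in>J. c i = r}. X i)" for r
  proof
    show "f -` {r} \<subseteq> (\<Union>i\<in>{i\<in>J. c i = r}. X i)"
    proof
      fix a assume "a \<in> f -` {r}"
      moreover obtain i where "i \<in> I" "a \<in> X i" using cover by blast
      ultimately show "a \<in> (\<Union>i\<in>{i\<in>J. c i = r}. X i)"
        using c by (intro UN_I[of i]) (auto simp: J_def)
    qed
    show "(\<Union>i\<in>{i\<in>J. c i = r}. X i) \<subseteq> f -` {r}"
      using c by (auto simp: J_def)
  qed
  have "m (f -` {r}) = (\<Sum>i\<in>{i\<in>J. c i = r}. m (X i))" for r
    unfolding level using J X disj
    by (intro measure_finite_UN) (auto intro: disjoint_family_on_mono[of _ I])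
  then have "simple_integral f = (\<Sum>r\<in>c ` J. \<Sum>i\<in>{i\<in>J. c i = r}. r * m (X i))"
    by (simp add: simple_integral_def range sum_distrib_left)
  also have "\<dots> = (\<Sum>r\<in>c ` J. \<Sum>i\<in>{i\<in>J. c i = r}. c i * m (X i))"
    by (intro sum.cong) auto
  also have "\<dots> = (\<Sum>i\<in>J. c i * m (X i))"
    by (rule sum.image_gen[symmetric]) (rule J(1))
  also have "\<dots> = (\<Sum>i\<in>I. c i * m (X i))"
    by (rule sum.mono_neutral_left) (auto simp: J_def I)
  finally show ?thesis .
qed

lemma simple_integral_const: "simple_integral (\<lambda>_. c) = c"
  by (simp add: simple_integral_def)

lemma simple_integral_indicator:
  assumes "D \<in> B"
  shows "simple_integral (\<lambda>a. if a \<in> D then 1 else 0) = m D"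
proof -
  have "simple_integral (\<lambda>a. if a \<in> D then 1 else 0) =
      (\<Sum>b\<in>{True, False}. (if b then 1 else 0) * m (if b then D else - D))"
    using assms by (intro simple_integral_partition) (auto simp: disjoint_family_on_def Compl_in_sets split: if_splits)
  then show ?thesis by simp
qed

lemma simple_integral_nonneg: "simple_function f \<Longrightarrow> (\<And>a. 0 \<le> f a) \<Longrightarrow> 0 \<le> simple_integral f"
  unfolding simple_integral_def simple_function_def
  by (auto intro!: sum_nonneg mult_nonneg_nonneg measure_nonneg)

lemma simple_integral_add:
  assumes f: "simple_function f" and g: "simple_function g"
  shows "simple_integral (\<lambda>a. f a + g a) = simple_integral f + simple_integral g"
proof -
  define X where "X i = f -` {fst i} \<inter> g -` {snd i}" for i
  let ?I = "range f \<times> range g"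
  have "a \<in> X (f a, g a)" for a by (simp add: X_def)
  then have cover: "(\<Union>i\<in>?I. X i) = UNIV" by blast
  have part: "finite ?I" "\<And>i. i \<in> ?I \<Longrightarrow> X i \<in> B" "disjoint_family_on X ?I"
    using f g by (auto simp: simple_function_def X_def disjoint_family_on_def)
  have "simple_integral (\<lambda>a. f a + g a) = (\<Sum>i\<in>?I. (fst i + snd i) * m (X i))"
    by (rule simple_integral_partition[OF part cover]) (auto simp: X_def)
  moreover have "simple_integral f = (\<Sum>i\<in>?I. fst i * m (X i))"
    by (rule simple_integral_partition[OF part cover]) (auto simp: X_def)
  moreover have "simple_integral g = (\<Sum>i\<in>?I. snd i * m (X i))"
    by (rule simple_integral_partition[OF part cover]) (auto simp: X_def)
  ultimately show ?thesis by (simp add: distrib_right sum.distrib)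
qed

end

lemma keisler_measure_on_def1: "c \<in> Cs \<Longrightarrow> keisler (def1 pl lt z Cs) m \<Longrightarrow> keisler_measure (def1 pl lt z Cs) m"
  by (simp add: keisler_measure_def keisler_measure_axioms_def algebra_def1)

lemma keisler_measure_on_def2: "c \<in> Cs \<Longrightarrow> keisler (def2 pl lt z Cs) m \<Longrightarrow> keisler_measure (def2 pl lt z Cs) m"
  by (simp add: keisler_measure_def keisler_measure_axioms_def algebra_def2)

section \<open>Eventual periodicity over \<open>\<int>\<close>\<close>

(* \<open>\<rho>\<close> maps variable names to the de Bruijn indices of Cooper's formulas. *)
fun num_of_ptm :: "(nat \<Rightarrow> nat) \<Rightarrow> ptm \<Rightarrow> num" where
  "num_of_ptm \<rho> (PVar k) = Bound (\<rho> k)"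
| "num_of_ptm \<rho> PZero = C 0"
| "num_of_ptm \<rho> (PPlus s t) = Add (num_of_ptm \<rho> s) (num_of_ptm \<rho> t)"

fun fm_of_pfm :: "(nat \<Rightarrow> nat) \<Rightarrow> pfm \<Rightarrow> fm" where
  "fm_of_pfm \<rho> (PEq s t) = Eq (Sub (num_of_ptm \<rho> s) (num_of_ptm \<rho> t))"
| "fm_of_pfm \<rho> (PLt s t) = Lt (Sub (num_of_ptm \<rho> s) (num_of_ptm \<rho> t))"
| "fm_of_pfm \<rho> (PNeg f) = Not (fm_of_pfm \<rho> f)"
| "fm_of_pfm \<rho> (PConj f g) = And (fm_of_pfm \<rho> f) (fm_of_pfm \<rho> g)"
| "fm_of_pfm \<rho> (PEx n f) = E (fm_of_pfm (\<lambda>k. if k = n then 0 else Suc (\<rho> k)) f)"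

lemma Inum_num_of_ptm: "Inum bs (num_of_ptm \<rho> t) = evalt (+) 0 (\<lambda>k. bs ! \<rho> k) t"
  by (induct t) auto

lemma Ifm_fm_of_pfm: "Ifm bbs bs (fm_of_pfm \<rho> f) \<longleftrightarrow> sat (+) (<) (0 :: int) f (\<lambda>k. bs ! \<rho> k)"
proof (induct f arbitrary: \<rho> bs)
  case (PEx n f)
  have "(\<lambda>k. (x # bs) ! (if k = n then 0 else Suc (\<rho> k))) = (\<lambda>k. bs ! \<rho> k)(n := x)" for x
    by (auto simp: fun_eq_iff)
  then show ?case using PEx by simp
qed (auto simp: Inum_num_of_ptm)

definition periodic_tail :: "bool \<Rightarrow> (int \<Rightarrow> 'p \<Rightarrow> bool) \<Rightarrow> bool" where
  "periodic_tail d P \<longleftrightarrow> (\<exists>N>0. \<forall>p. \<exists>c. \<forall>x x'.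
     dir_less (<) d c x \<longrightarrow> dir_less (<) d c x' \<longrightarrow> N dvd x - x' \<longrightarrow> (P x p \<longleftrightarrow> P x' p))"

lemma dir_less_int_common_bound:
  fixes c1 c2 :: int
  shows "\<exists>c. \<forall>x. dir_less (<) d c x \<longrightarrow> dir_less (<) d c1 x \<and> dir_less (<) d c2 x"
  by (rule exI[of _ "if d then max c1 c2 else min c1 c2"]) (simp add: dir_less_def)

lemma periodic_tail_const: "periodic_tail d (\<lambda>x p. Q p)"
  unfolding periodic_tail_def by (rule exI[of _ 1]) auto

lemma periodic_tail_combine:
  assumes "periodic_tail d P" "periodic_tail d Q"
  shows "periodic_tail d (\<lambda>x p. \<phi> (P x p) (Q x p))"
proof -
  obtain N1 where N1: "N1 > 0" "\<forall>p. \<exists>c. \<forall>x x'.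
      dir_less (<) d c x \<longrightarrow> dir_less (<) d c x' \<longrightarrow> N1 dvd x - x' \<longrightarrow> (P x p \<longleftrightarrow> P x' p)"
    using assms(1) unfolding periodic_tail_def by blast
  obtain N2 where N2: "N2 > 0" "\<forall>p. \<exists>c. \<forall>x x'.
      dir_less (<) d c x \<longrightarrow> dir_less (<) d c x' \<longrightarrow> N2 dvd x - x' \<longrightarrow> (Q x p \<longleftrightarrow> Q x' p)"
    using assms(2) unfolding periodic_tail_def by blast
  show ?thesis
    unfolding periodic_tail_def
  proof (rule exI[of _ "N1 * N2"], intro conjI allI)
    show "0 < N1 * N2" using N1 N2 by simp
    fix p
    obtain c1 where c1: "\<forall>x x'. dir_less (<) d c1 x \<longrightarrow> dir_less (<) d c1 x' \<longrightarrow>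
        N1 dvd x - x' \<longrightarrow> (P x p \<longleftrightarrow> P x' p)"
      using N1 by blast
    obtain c2 where c2: "\<forall>x x'. dir_less (<) d c2 x \<longrightarrow> dir_less (<) d c2 x' \<longrightarrow>
        N2 dvd x - x' \<longrightarrow> (Q x p \<longleftrightarrow> Q x' p)"
      using N2 by blast
    obtain c where c: "\<forall>x. dir_less (<) d c x \<longrightarrow> dir_less (<) d c1 x \<and> dir_less (<) d c2 x"
      using dir_less_int_common_bound by blast
    show "\<exists>c. \<forall>x x'. dir_less (<) d c x \<longrightarrow> dir_less (<) d c x' \<longrightarrow> N1 * N2 dvd x - x' \<longrightarrow>
        (\<phi> (P x p) (Q x p) \<longleftrightarrow> \<phi> (P x' p) (Q x' p))"
    proof (intro exI[of _ c] allI impI)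
      fix x x' assume x: "dir_less (<) d c x" "dir_less (<) d c x'" and "N1 * N2 dvd x - x'"
      then have "N1 dvd x - x'" "N2 dvd x - x'"
        by (auto intro: dvd_mult_left dvd_mult_right)
      then have "P x p \<longleftrightarrow> P x' p" "Q x p \<longleftrightarrow> Q x' p"
        using c1 c2 c x by blast+
      then show "\<phi> (P x p) (Q x p) \<longleftrightarrow> \<phi> (P x' p) (Q x' p)" by simp
    qed
  qed
qed

lemma Inum_affine: "\<exists>a b. \<forall>x. Inum (x # bs) t = a * x + b"
proof (induct t)
  case (C c)
  show ?case by (intro exI[of _ 0] exI[of _ c]) simp
next
  case (Bound n)
  show ?case
  proof (cases n)
    case 0
    then show ?thesis by (intro exI[of _ 1] exI[of _ 0]) simp
  next
    case (Suc k)
    then show ?thesis by (intro exI[of _ 0] exI[of _ "bs ! k"]) simp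
  qed
next
  case (CN n i t)
  then obtain a b where ab: "\<forall>x. Inum (x # bs) t = a * x + b" by blast
  show ?case
  proof (cases n)
    case 0
    then show ?thesis using ab by (intro exI[of _ "i + a"] exI[of _ b]) (auto simp: algebra_simps)
  next
    case (Suc k)
    then show ?thesis using ab by (intro exI[of _ a] exI[of _ "i * bs ! k + b"]) (auto simp: algebra_simps)
  qed
next
  case (Neg t)
  then obtain a b where "\<forall>x. Inum (x # bs) t = a * x + b" by blast
  then show ?case by (intro exI[of _ "- a"] exI[of _ "- b"]) auto
next
  case (Add s t)
  then obtain a b a' b' where "\<forall>x. Inum (x # bs) s = a * x + b" "\<forall>x. Inum (x # bs) t = a' * x + b'"
    by blast
  then show ?case by (intro exI[of _ "a + a'"] exI[of _ "b + b'"]) (auto simp: algebra_simps)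
next
  case (Sub s t)
  then obtain a b a' b' where "\<forall>x. Inum (x # bs) s = a * x + b" "\<forall>x. Inum (x # bs) t = a' * x + b'"
    by blast
  then show ?case by (intro exI[of _ "a - a'"] exI[of _ "b - b'"]) (auto simp: algebra_simps)
next
  case (Mul i t)
  then obtain a b where "\<forall>x. Inum (x # bs) t = a * x + b" by blast
  then show ?case by (intro exI[of _ "i * a"] exI[of _ "i * b"]) (auto simp: algebra_simps)
qed

lemma sgn_affine_eventually_const:
  fixes a b :: int
  shows "\<exists>c. \<forall>x. dir_less (<) d c x \<longrightarrow> sgn (a * x + b) = (if d then sgn a else - sgn a) + (if a = 0 then sgn b else 0)"
proof (intro exI[of _ "if d then \<bar>b\<bar> else - \<bar>b\<bar>"] allI impI)
  fix x assume x: "dir_less (<) d (if d then \<bar>b\<bar> else - \<bar>b\<bar>) x"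
  then have "\<bar>b\<bar> < \<bar>x\<bar>" and sgn_x: "sgn x = (if d then 1 else -1)"
    by (auto simp: dir_less_def split: if_splits)
  show "sgn (a * x + b) = (if d then sgn a else - sgn a) + (if a = 0 then sgn b else 0)"
  proof (cases "a = 0")
    case False
    then have "1 * \<bar>x\<bar> \<le> \<bar>a\<bar> * \<bar>x\<bar>"
      by (intro mult_right_mono) auto
    then have "\<bar>x\<bar> \<le> \<bar>a * x\<bar>" by (simp add: abs_mult)
    then have "sgn (a * x + b) = sgn (a * x)"
      using \<open>\<bar>b\<bar> < \<bar>x\<bar>\<close> by (auto simp: sgn_if)
    then show ?thesis using False sgn_x by (simp add: sgn_mult)
  qed (auto simp: sgn_x)
qed

lemma periodic_tail_Inum_sgn:
  assumes "\<And>y :: int. P y \<longleftrightarrow> P (sgn y)"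
  shows "periodic_tail d (\<lambda>x bs. P (Inum (x # bs) t))"
  unfolding periodic_tail_def
proof (rule exI[of _ 1], intro conjI allI)
  fix bs
  obtain a b where ab: "\<forall>x. Inum (x # bs) t = a * x + b" using Inum_affine by blast
  obtain c where "\<forall>x. dir_less (<) d c x \<longrightarrow>
      sgn (a * x + b) = (if d then sgn a else - sgn a) + (if a = 0 then sgn b else 0)"
    using sgn_affine_eventually_const by blast
  then show "\<exists>c. \<forall>x x'. dir_less (<) d c x \<longrightarrow> dir_less (<) d c x' \<longrightarrow> 1 dvd x - x' \<longrightarrow>
      (P (Inum (x # bs) t) \<longleftrightarrow> P (Inum (x' # bs) t))"
    using ab assms by metis
qed simp

lemma dvd_iff_of_dvd_diff: "k dvd u - v \<Longrightarrow> k dvd u \<longleftrightarrow> k dvd (v :: int)"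
  by (metis diff_add_cancel dvd_add_right_iff)

lemma periodic_tail_Inum_dvd: "periodic_tail d (\<lambda>x bs. k dvd Inum (x # bs) t)"
proof (cases "k = 0")
  case True
  then show ?thesis
    using periodic_tail_Inum_sgn[of "\<lambda>y. y = 0" d t] by (simp add: sgn_0_0)
next
  case False
  show ?thesis
    unfolding periodic_tail_def
  proof (rule exI[of _ "\<bar>k\<bar>"], intro conjI allI)
    show "0 < \<bar>k\<bar>" using False by simp
    fix bs
    obtain a b where "\<forall>x. Inum (x # bs) t = a * x + b" using Inum_affine by blast
    moreover have "k dvd (a * x + b) - (a * x' + b)" if "\<bar>k\<bar> dvd x - x'" for x x'
      using that by (simp add: right_diff_distrib[symmetric])
    ultimately show "\<exists>c. \<forall>x x'. dir_less (<) d c x \<longrightarrow> dir_less (<) d c x' \<longrightarrow> \<bar>k\<bar> dvd x - x' \<longrightarrow>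
        (k dvd Inum (x # bs) t \<longleftrightarrow> k dvd Inum (x' # bs) t)"
      using dvd_iff_of_dvd_diff by metis
  qed
qed

lemma periodic_tail_qfree: "qfree q \<Longrightarrow> periodic_tail d (\<lambda>x bs. Ifm bbs (x # bs) q)"
proof (induct q)
  case (Lt t)
  show ?case using periodic_tail_Inum_sgn[of "\<lambda>y. y < 0" d t] by (simp add: sgn_if)
next
  case (Le t)
  show ?case using periodic_tail_Inum_sgn[of "\<lambda>y. y \<le> 0" d t] by (simp add: sgn_if)
next
  case (Gt t)
  show ?case using periodic_tail_Inum_sgn[of "\<lambda>y. 0 < y" d t] by (simp add: sgn_if)
next
  case (Ge t)
  show ?case using periodic_tail_Inum_sgn[of "\<lambda>y. 0 \<le> y" d t] by (simp add: sgn_if)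
next
  case (Eq t)
  show ?case using periodic_tail_Inum_sgn[of "\<lambda>y. y = 0" d t] by (simp add: sgn_if)
next
  case (NEq t)
  show ?case using periodic_tail_Inum_sgn[of "\<lambda>y. y \<noteq> 0" d t] by (simp add: sgn_if)
next
  case (Dvd k t)
  show ?case using periodic_tail_Inum_dvd[of d k t] by simp
next
  case (NDvd k t)
  have "periodic_tail d (\<lambda>x bs. k dvd Inum (x # bs) t)" by (rule periodic_tail_Inum_dvd)
  from periodic_tail_combine[OF this this, of "\<lambda>a b. \<not> a"] show ?case by simp
next
  case (Not p)
  then have "periodic_tail d (\<lambda>x bs. Ifm bbs (x # bs) p)" by simp
  from periodic_tail_combine[OF this this, of "\<lambda>a b. \<not> a"] show ?case by simp
next
  case (And p q)
  then have "periodic_tail d (\<lambda>x bs. Ifm bbs (x # bs) p)" "periodic_tail d (\<lambda>x bs. Ifm bbs (x # bs) q)"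
    by simp_all
  from periodic_tail_combine[OF this, of "(\<and>)"] show ?case by simp
next
  case (Or p q)
  then have "periodic_tail d (\<lambda>x bs. Ifm bbs (x # bs) p)" "periodic_tail d (\<lambda>x bs. Ifm bbs (x # bs) q)"
    by simp_all
  from periodic_tail_combine[OF this, of "(\<or>)"] show ?case by simp
next
  case (Imp p q)
  then have "periodic_tail d (\<lambda>x bs. Ifm bbs (x # bs) p)" "periodic_tail d (\<lambda>x bs. Ifm bbs (x # bs) q)"
    by simp_all
  from periodic_tail_combine[OF this, of "(\<longrightarrow>)"] show ?case by simp
next
  case (Iff p q)
  then have "periodic_tail d (\<lambda>x bs. Ifm bbs (x # bs) p)" "periodic_tail d (\<lambda>x bs. Ifm bbs (x # bs) q)"
    by simp_all
  from periodic_tail_combine[OF this, of "(=)"] show ?case by simp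
qed (auto intro: periodic_tail_const[of d "\<lambda>_. True", simplified]
  periodic_tail_const[of d "\<lambda>_. False", simplified] periodic_tail_const)

(* Cooper's quantifier elimination \<open>pa\<close> reduces the claim to quantifier-free formulas. *)
lemma periodic_tail_sat_int: "periodic_tail d (\<lambda>x (v :: nat \<Rightarrow> int). sat (+) (<) 0 f (v(0 := x)))"
proof -
  define q where "q = pa (fm_of_pfm id f)"
  define L where "L = Suc (fm_bound f)"
  have "qfree q" using mirqe by (simp add: q_def)
  then have "periodic_tail d (\<lambda>x bs. Ifm [] (x # bs) q)"
    by (rule periodic_tail_qfree)
  then have "periodic_tail d (\<lambda>x v. Ifm [] (x # map v [1..<L]) q)"
    unfolding periodic_tail_def by blast
  moreover have "Ifm [] (x # map v [1..<L]) q \<longleftrightarrow> sat (+) (<) 0 f (v(0 := x))" for x v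
  proof -
    have "Ifm [] (x # map v [1..<L]) q \<longleftrightarrow> sat (+) (<) 0 f (\<lambda>k. (x # map v [1..<L]) ! k)"
      using mirqe Ifm_fm_of_pfm[of "[]" _ id f] by (simp add: q_def)
    also have "\<dots> \<longleftrightarrow> sat (+) (<) 0 f (v(0 := x))"
      by (rule sat_cong) (auto simp: L_def nth_Cons split: nat.split simp del: upt_Suc)
    finally show ?thesis .
  qed
  ultimately show ?thesis by simp
qed

section \<open>Residue classes in an elementary extension of \<open>\<int>\<close>\<close>

definition class_tail ::
    "('u \<Rightarrow> 'u \<Rightarrow> 'u) \<Rightarrow> ('u \<Rightarrow> 'u \<Rightarrow> bool) \<Rightarrow> 'u \<Rightarrow> bool \<Rightarrow> nat \<Rightarrow> 'u \<Rightarrow> 'u \<Rightarrow> 'u set" where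
  "class_tail pl lt z d N r c = mod_class pl z N r \<inter> {y. dir_less lt d c y}"

definition PConstantOnTail :: "bool \<Rightarrow> nat \<Rightarrow> nat \<Rightarrow> nat \<Rightarrow> nat \<Rightarrow> pfm \<Rightarrow> pfm" where
  "PConstantOnTail d N cv tv rv f =
    PDisj (PAll 0 (PImp (PConj (PDirLess d cv 0) (PCong N 0 tv rv)) f))
          (PAll 0 (PImp (PConj (PDirLess d cv 0) (PCong N 0 tv rv)) (PNeg f)))"

lemma sat_PConstantOnTail:
  assumes "cv \<noteq> 0" "rv \<noteq> 0" "tv \<noteq> 0" "tv \<noteq> rv"
  shows "sat pl lt z (PConstantOnTail d N cv tv rv f) w \<longleftrightarrow>
    class_tail pl lt z d N (w rv) (w cv) \<subseteq> {y. sat pl lt z f (w(0 := y))} \<or>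
    class_tail pl lt z d N (w rv) (w cv) \<inter> {y. sat pl lt z f (w(0 := y))} = {}"
  using assms unfolding PConstantOnTail_def class_tail_def by (simp add: subset_iff set_eq_iff) blast

lemma eventually_periodic_int:
  "\<exists>N>0. \<forall>v. \<exists>c. \<forall>r. class_tail (+) (<) (0 :: int) d N r c \<subseteq> {y. sat (+) (<) 0 f (v(0 := y))} \<or>
     class_tail (+) (<) 0 d N r c \<inter> {y. sat (+) (<) 0 f (v(0 := y))} = {}"
proof -
  obtain N :: int where "N > 0" and N: "\<forall>v. \<exists>c. \<forall>x x'. dir_less (<) d c x \<longrightarrow> dir_less (<) d c x' \<longrightarrow>
      N dvd x - x' \<longrightarrow> (sat (+) (<) 0 f (v(0 := x)) \<longleftrightarrow> sat (+) (<) 0 f (v(0 := x')))"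
    using periodic_tail_sat_int[of d f] unfolding periodic_tail_def by blast
  show ?thesis
  proof (rule exI[of _ "nat N"], intro conjI allI)
    show "0 < nat N" using \<open>N > 0\<close> by simp
    fix v
    obtain c where c: "\<forall>x x'. dir_less (<) d c x \<longrightarrow> dir_less (<) d c x' \<longrightarrow>
        N dvd x - x' \<longrightarrow> (sat (+) (<) 0 f (v(0 := x)) \<longleftrightarrow> sat (+) (<) 0 f (v(0 := x')))"
      using N by blast
    show "\<exists>c. \<forall>r. class_tail (+) (<) 0 d (nat N) r c \<subseteq> {y. sat (+) (<) 0 f (v(0 := y))} \<or>
        class_tail (+) (<) 0 d (nat N) r c \<inter> {y. sat (+) (<) 0 f (v(0 := y))} = {}"
    proof (intro exI[of _ c] allI)
      fix r
      have "sat (+) (<) 0 f (v(0 := y)) \<longleftrightarrow> sat (+) (<) 0 f (v(0 := y'))"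
        if "y \<in> class_tail (+) (<) 0 d (nat N) r c" "y' \<in> class_tail (+) (<) 0 d (nat N) r c" for y y'
      proof -
        have "N dvd y - r" "N dvd y' - r"
          using that \<open>N > 0\<close> by (auto simp: class_tail_def mod_class_int)
        then have "N dvd (y - r) - (y' - r)" by (rule dvd_diff)
        then show ?thesis using c that by (simp add: class_tail_def)
      qed
      then show "class_tail (+) (<) 0 d (nat N) r c \<subseteq> {y. sat (+) (<) 0 f (v(0 := y))} \<or>
          class_tail (+) (<) 0 d (nat N) r c \<inter> {y. sat (+) (<) 0 f (v(0 := y))} = {}"
        by blast
    qed
  qed
qed

definition PResidues :: "nat \<Rightarrow> nat list \<Rightarrow> pfm" where
  "PResidues N ks = PDisjs (map (\<lambda>k. PCong N 0 1 (k + 2)) ks)"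

lemma sat_PResidues: "sat pl lt z (PResidues N ks) v \<longleftrightarrow> (\<exists>k\<in>set ks. v 0 \<in> mod_class pl z N (v (k + 2)))"
  by (simp add: PResidues_def)

definition PPeriodicBeyond :: "bool \<Rightarrow> nat \<Rightarrow> nat \<Rightarrow> pfm \<Rightarrow> pfm" where
  "PPeriodicBeyond d N cv f = PEx cv (PConjs (map (\<lambda>k. PConstantOnTail d N cv (Suc cv) (cv + 2 + k) f) [0..<N]))"

lemma sat_PConjs_map: "sat pl lt z (PConjs (map g xs)) v \<longleftrightarrow> (\<forall>x\<in>set xs. sat pl lt z (g x) v)"
  by (induct xs) auto

lemma sat_PPeriodicBeyond:
  assumes "fm_bound f < cv"
  shows "sat pl lt z (PPeriodicBeyond d N cv f) w \<longleftrightarrow>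
    (\<exists>c. \<forall>k<N. class_tail pl lt z d N (w (cv + 2 + k)) c \<subseteq> {y. sat pl lt z f (w(0 := y))} \<or>
               class_tail pl lt z d N (w (cv + 2 + k)) c \<inter> {y. sat pl lt z f (w(0 := y))} = {})"
proof -
  have "sat pl lt z (PPeriodicBeyond d N cv f) w \<longleftrightarrow>
      (\<exists>c. \<forall>k<N. sat pl lt z (PConstantOnTail d N cv (Suc cv) (cv + 2 + k) f) (w(cv := c)))"
    unfolding PPeriodicBeyond_def sat.simps(5) sat_PConjs_map by (simp add: Ball_def)
  moreover have "{y. sat pl lt z f ((w(cv := c))(0 := y))} = {y. sat pl lt z f (w(0 := y))}" for c
    using assms by (intro Collect_cong sat_cong) auto
  moreover have "cv \<noteq> 0" using assms by simp
  ultimately show ?thesis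
    by (simp add: sat_PConstantOnTail)
qed

locale int_elementary_extension =
  fixes pl :: "'u \<Rightarrow> 'u \<Rightarrow> 'u" and lt :: "'u \<Rightarrow> 'u \<Rightarrow> bool" and z :: 'u and e :: "int \<Rightarrow> 'u"
  assumes elem_emb: "elem_emb pl lt z e"
begin

lemma transfer_from_int:
  assumes "sat (+) (<) (0 :: int) (PAlls ns f) v" and "\<And>k. k \<notin> set ns \<Longrightarrow> u k = e (v k)"
  shows "sat pl lt z f u"
proof -
  have "sat pl lt z (PAlls ns f) (e \<circ> v)"
    using elem_emb assms(1) unfolding elem_emb_def by blast
  then show ?thesis
    using assms(2) unfolding sat_PAlls by auto
qed

lemma lt_trans: "lt a b \<Longrightarrow> lt b c \<Longrightarrow> lt a c"
proof -
  assume "lt a b" "lt b c"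
  define f where "f = PImp (PConj (PLt (PVar 0) (PVar 1)) (PLt (PVar 1) (PVar 2))) (PLt (PVar 0) (PVar 2))"
  have "sat (+) (<) (0 :: int) (PAlls [0, 1, 2] f) (\<lambda>_. 0)"
    unfolding sat_PAlls f_def by auto
  then have "sat pl lt z f ((\<lambda>_. e 0)(0 := a, 1 := b, 2 := c))"
    by (rule transfer_from_int) auto
  then show "lt a c" using \<open>lt a b\<close> \<open>lt b c\<close> by (simp add: f_def)
qed

lemma dir_less_trans: "dir_less lt d a b \<Longrightarrow> dir_less lt d b c \<Longrightarrow> dir_less lt d a c"
  by (cases d) (auto simp: dir_less_def intro: lt_trans)

abbreviation residue_class :: "nat \<Rightarrow> nat \<Rightarrow> 'u set" where
  "residue_class N k \<equiv> mod_class pl z N (e (int k))"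

definition residues :: "nat \<Rightarrow> nat set \<Rightarrow> 'u set" where
  "residues N K = (\<Union>k\<in>K. residue_class N k)"

lemma residues_def1:
  assumes "finite K"
  shows "residues N K \<in> def1 pl lt z (range e)"
proof -
  define v where "v n = e (int (n - 2))" for n
  have "residues N K = {y. sat pl lt z (PResidues N (sorted_list_of_set K)) (v(0 := y))}"
    using assms by (auto simp: residues_def sat_PResidues v_def)
  also have "\<dots> \<in> def1 pl lt z (range e)"
    by (rule def1I) (simp add: v_def)
  finally show ?thesis .
qed

lemma residues_lessThan:
  assumes "0 < N"
  shows "residues N {..<N} = UNIV"
proof -
  define v :: "nat \<Rightarrow> int" where "v n = int (n - 2)" for n
  have Z: "sat (+) (<) 0 (PAlls [0] (PResidues N [0..<N])) v"
  proof (unfold sat_PAlls, intro allI impI)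
    fix u :: "nat \<Rightarrow> int" assume u: "\<forall>k. k \<notin> set [0] \<longrightarrow> u k = v k"
    define k where "k = nat (u 0 mod int N)"
    have "int k = u 0 mod int N" using assms by (simp add: k_def)
    moreover have "u 0 mod int N < int N" using assms by simp
    ultimately have "k < N" "u 0 \<in> mod_class (+) 0 N (int k)"
      by (simp_all add: mod_class_int)
    moreover have "u (k + 2) = int k" using u by (simp add: v_def)
    ultimately show "sat (+) (<) 0 (PResidues N [0..<N]) u"
      by (auto simp: sat_PResidues intro!: bexI[of _ k])
  qed
  have "y \<in> residues N {..<N}" for y
  proof -
    have "sat pl lt z (PResidues N [0..<N]) ((e \<circ> v)(0 := y))"
      by (rule transfer_from_int[OF Z]) simp
    then show ?thesis by (auto simp: sat_PResidues residues_def v_def)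
  qed
  then show ?thesis by blast
qed

lemma residue_class_cofinal:
  assumes "0 < N" "k < N"
  shows "\<exists>y\<in>residue_class N k. dir_less lt d a y \<and> dir_less lt d b y"
proof -
  define f where "f = PEx 2 (PConj (PDirLess d 0 2) (PConj (PDirLess d 1 2) (PCong N 2 3 4)))"
  have Z: "sat (+) (<) (0 :: int) (PAlls [0, 1] f) (\<lambda>_. int k)"
  proof (unfold sat_PAlls, intro allI impI)
    fix u :: "nat \<Rightarrow> int" assume u: "\<forall>n. n \<notin> set [0, 1] \<longrightarrow> u n = int k"
    define s where "s = (if d then 1 else - 1) * (\<bar>u 0\<bar> + \<bar>u 1\<bar> + int k + 1)"
    define y where "y = int N * s + int k"
    have abs: "u 0 \<le> \<bar>u 0\<bar>" "u 1 \<le> \<bar>u 1\<bar>" "- \<bar>u 0\<bar> \<le> u 0" "- \<bar>u 1\<bar> \<le> u 1" "0 \<le> int k"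
      by auto
    have "dir_less (<) d (u 0) y \<and> dir_less (<) d (u 1) y"
    proof (cases d)
      case True
      then have "s = \<bar>u 0\<bar> + \<bar>u 1\<bar> + int k + 1" by (simp add: s_def)
      moreover from this have "1 * s \<le> int N * s"
        using assms by (intro mult_right_mono) auto
      ultimately show ?thesis
        unfolding dir_less_def y_def if_P[OF True] using abs by linarith
    next
      case False
      then have "s = - (\<bar>u 0\<bar> + \<bar>u 1\<bar> + int k + 1)" by (simp add: s_def)
      moreover from this have "int N * s \<le> 1 * s"
        using assms by (intro mult_right_mono_neg) auto
      ultimately show ?thesis
        unfolding dir_less_def y_def if_not_P[OF False] using abs by linarith
    qed
    moreover have "y \<in> mod_class (+) 0 N (u 4)"
      using u by (simp add: mod_class_int y_def)
    ultimately show "sat (+) (<) 0 f u"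
      unfolding f_def by (auto intro!: exI[of _ y])
  qed
  have "sat pl lt z f ((\<lambda>_. e (int k))(0 := a, 1 := b))"
    by (rule transfer_from_int[OF Z]) auto
  then show ?thesis by (auto simp: f_def)
qed

definition periodic_beyond :: "bool \<Rightarrow> nat \<Rightarrow> 'u \<Rightarrow> 'u set \<Rightarrow> bool" where
  "periodic_beyond d N c D \<longleftrightarrow> (\<forall>k<N.
     class_tail pl lt z d N (e (int k)) c \<subseteq> D \<or> class_tail pl lt z d N (e (int k)) c \<inter> D = {})"

definition eventual_classes :: "bool \<Rightarrow> nat \<Rightarrow> 'u set \<Rightarrow> nat set" where
  "eventual_classes d N D = {k. k < N \<and> (\<exists>c. class_tail pl lt z d N (e (int k)) c \<subseteq> D)}"

lemma periodic_beyond_eq_residues: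
  assumes "0 < N" "periodic_beyond d N c D"
  shows "D \<inter> {y. dir_less lt d c y} = residues N (eventual_classes d N D) \<inter> {y. dir_less lt d c y}"
proof (intro set_eqI iffI)
  fix y assume y: "y \<in> D \<inter> {y. dir_less lt d c y}"
  obtain k where k: "k < N" "y \<in> residue_class N k"
    using residues_lessThan[OF assms(1)] by (auto simp: residues_def)
  then have "y \<in> class_tail pl lt z d N (e (int k)) c \<inter> D"
    using y by (simp add: class_tail_def)
  then have "class_tail pl lt z d N (e (int k)) c \<subseteq> D"
    using assms(2) k(1) unfolding periodic_beyond_def by blast
  then show "y \<in> residues N (eventual_classes d N D) \<inter> {y. dir_less lt d c y}"
    using k y by (auto simp: residues_def eventual_classes_def)
next
  fix y assume y: "y \<in> residues N (eventual_classes d N D) \<inter> {y. dir_less lt d c y}"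
  then obtain k c' where k: "k < N" "y \<in> residue_class N k"
    and c': "class_tail pl lt z d N (e (int k)) c' \<subseteq> D"
    by (auto simp: residues_def eventual_classes_def)
  obtain y' where "y' \<in> residue_class N k" "dir_less lt d c y'" "dir_less lt d c' y'"
    using residue_class_cofinal[OF assms(1) k(1)] by blast
  then have "y' \<in> class_tail pl lt z d N (e (int k)) c \<inter> D"
    using c' by (auto simp: class_tail_def)
  then have "class_tail pl lt z d N (e (int k)) c \<subseteq> D"
    using assms(2) k(1) unfolding periodic_beyond_def by blast
  then show "y \<in> D \<inter> {y. dir_less lt d c y}"
    using k y by (auto simp: class_tail_def)
qed

(* The period does not depend on the parameters, so periodicity over \<open>\<int>\<close> is a single
   first-order sentence, which transfers to the extension. *)
lemma eventually_periodic: "\<exists>N>0. \<forall>u. \<exists>c. periodic_beyond d N c {y. sat pl lt z f (u(0 := y))}"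
proof -
  obtain N where "N > 0" and N: "\<forall>v. \<exists>c. \<forall>r.
      class_tail (+) (<) (0 :: int) d N r c \<subseteq> {y. sat (+) (<) 0 f (v(0 := y))} \<or>
      class_tail (+) (<) 0 d N r c \<inter> {y. sat (+) (<) 0 f (v(0 := y))} = {}"
    using eventually_periodic_int by blast
  define cv where "cv = Suc (fm_bound f)"
  define v :: "nat \<Rightarrow> int" where "v n = int (n - (cv + 2))" for n
  have cv: "fm_bound f < cv" by (simp add: cv_def)
  have Z: "sat (+) (<) 0 (PAlls [1..<cv] (PPeriodicBeyond d N cv f)) v"
  proof (unfold sat_PAlls, intro allI impI)
    fix u :: "nat \<Rightarrow> int" assume "\<forall>k. k \<notin> set [1..<cv] \<longrightarrow> u k = v k"
    then have uk: "u (cv + 2 + k) = int k" for k by (simp add: v_def)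
    obtain c where "\<forall>r. class_tail (+) (<) 0 d N r c \<subseteq> {y. sat (+) (<) 0 f (u(0 := y))} \<or>
        class_tail (+) (<) 0 d N r c \<inter> {y. sat (+) (<) 0 f (u(0 := y))} = {}"
      using N by blast
    then show "sat (+) (<) 0 (PPeriodicBeyond d N cv f) u"
      unfolding sat_PPeriodicBeyond[OF cv] uk by blast
  qed
  show ?thesis
  proof (intro exI[of _ N] conjI allI)
    fix u
    define u' where "u' n = (if 1 \<le> n \<and> n < cv then u n else e (v n))" for n
    have "sat pl lt z (PPeriodicBeyond d N cv f) u'"
      by (rule transfer_from_int[OF Z]) (auto simp: u'_def)
    moreover have "u' (cv + 2 + k) = e (int k)" for k
      by (simp add: u'_def v_def)
    moreover have "{y. sat pl lt z f (u'(0 := y))} = {y. sat pl lt z f (u(0 := y))}"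
      using cv by (intro Collect_cong sat_cong) (auto simp: u'_def)
    ultimately show "\<exists>c. periodic_beyond d N c {y. sat pl lt z f (u(0 := y))}"
      by (simp add: sat_PPeriodicBeyond[OF cv] periodic_beyond_def)
  qed (rule \<open>N > 0\<close>)
qed

lemma def1_eventually_contained:
  assumes "S \<in> def2 pl lt z UNIV"
  shows "{a. \<exists>c. class_tail pl lt z d N (e (int k)) c \<subseteq> {b. (a, b) \<in> S}} \<in> def1 pl lt z UNIV"
proof (rule def2E[OF assms])
  fix f v assume S: "S = {(a, b). sat pl lt z f (v(0 := a, 1 := b))}"
  define M where "M = fm_bound f + 2"
  define u where "u = v(M + 2 := e (int k))"
  have "sat pl lt z f (u(0 := a, M := c, 1 := y)) \<longleftrightarrow> sat pl lt z f (v(0 := a, 1 := y))" for a c y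
    by (rule sat_cong) (auto simp: u_def M_def)
  then have "{a. \<exists>c. class_tail pl lt z d N (e (int k)) c \<subseteq> {b. (a, b) \<in> S}} =
      {a. sat pl lt z (PEx M (PAll 1 (PImp (PConj (PDirLess d M 1) (PCong N 1 (M + 1) (M + 2))) f)))
            (u(0 := a))}"
    by (simp add: S class_tail_def subset_iff M_def u_def conj_commute)
  also have "\<dots> \<in> def1 pl lt z UNIV"
    by (rule def1I) simp
  finally show ?thesis .
qed

lemma def2_sections_periodic:
  assumes "S \<in> def2 pl lt z Cs"
  shows "\<exists>N>0. \<forall>a. \<exists>c. periodic_beyond d N c {b. (a, b) \<in> S}"
proof (rule def2_sections[OF assms])
  fix g w assume sections: "\<And>a. {b. (a, b) \<in> S} = {b. sat pl lt z g ((w(1 := a))(0 := b))}"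
  show ?thesis
    unfolding sections using eventually_periodic[of d g] by blast
qed

lemma def1_periodic_beyond:
  assumes "D \<in> def1 pl lt z Cs"
  obtains N c where "0 < N" "periodic_beyond d N c D"
proof -
  have "{b. (a, b) \<in> UNIV \<times> D} = D" for a :: 'u by auto
  then show ?thesis
    using def2_sections_periodic[OF def1_cylinder_y[OF assms], of d] that by fastforce
qed

lemma tail_measure_eq_residues:
  assumes m: "keisler (def1 pl lt z UNIV) m" and tail: "\<And>c. m {y. dir_less lt d c y} = 1"
    and D: "D \<in> def1 pl lt z UNIV" and N: "0 < N" "periodic_beyond d N c D"
  shows "m D = m (residues N (eventual_classes d N D))"
proof -
  interpret keisler_measure "def1 pl lt z UNIV" m
    using keisler_measure_on_def1[OF UNIV_I m] .
  have "finite (eventual_classes d N D)"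
    by (rule finite_subset[of _ "{..<N}"]) (auto simp: eventual_classes_def)
  then have "residues N (eventual_classes d N D) \<in> def1 pl lt z UNIV"
    using def1_mono[OF residues_def1 subset_UNIV] by blast
  then show ?thesis
    using periodic_beyond_eq_residues[OF N] D tail def1_dir_less[OF UNIV_I]
    by (intro measure_eq_on_full) auto
qed

lemma def1_eventual_classes_eq:
  assumes S: "S \<in> def2 pl lt z UNIV" and "0 < N" "K \<subseteq> {..<N}"
  shows "{a. eventual_classes d N {b. (a, b) \<in> S} = K} \<in> def1 pl lt z UNIV"
proof -
  interpret algebra UNIV "def1 pl lt z UNIV"
    by (rule algebra_def1) simp
  define A where "A k = {a. \<exists>c. class_tail pl lt z d N (e (int k)) c \<subseteq> {b. (a, b) \<in> S}}" for k
  have "eventual_classes d N {b. (a, b) \<in> S} = {k. k < N \<and> a \<in> A k}" for a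
    by (auto simp: eventual_classes_def A_def)
  then have "{a. eventual_classes d N {b. (a, b) \<in> S} = K} = {a. \<forall>k<N. a \<in> A k \<longleftrightarrow> k \<in> K}"
    using assms(3) by (intro Collect_cong) (auto simp: set_eq_iff)
  also have "\<dots> = (\<Inter>k\<in>{..<N}. if k \<in> K then A k else UNIV - A k)"
    by auto
  also have "\<dots> \<in> def1 pl lt z UNIV"
    using \<open>0 < N\<close> def1_eventually_contained[OF S] by (intro finite_INT) (auto simp: A_def)
  finally show ?thesis .
qed

end

section \<open>The product measure\<close>

locale tail_measures = int_elementary_extension pl lt z e
    for pl :: "'u \<Rightarrow> 'u \<Rightarrow> 'u" and lt z e +
  fixes d :: bool and \<mu> \<nu> :: "'u set \<Rightarrow> real"
  assumes keisler_\<mu>: "keisler (def1 pl lt z UNIV) \<mu>" and keisler_\<nu>: "keisler (def1 pl lt z UNIV) \<nu>"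
    and \<mu>_tail: "\<And>c. \<mu> {y. dir_less lt d c y} = 1" and \<nu>_tail: "\<And>c. \<nu> {y. dir_less lt d c y} = 1"
begin

sublocale mu: keisler_measure "def1 pl lt z UNIV" \<mu>
  by (rule keisler_measure_on_def1[OF UNIV_I keisler_\<mu>])

sublocale nu: keisler_measure "def1 pl lt z UNIV" \<nu>
  by (rule keisler_measure_on_def1[OF UNIV_I keisler_\<nu>])

definition section_measure :: "('u \<times> 'u) set \<Rightarrow> 'u \<Rightarrow> real" where
  "section_measure S a = \<nu> {b. (a, b) \<in> S}"

lemma section_in_def1: "S \<in> def2 pl lt z UNIV \<Longrightarrow> {b. (a, b) \<in> S} \<in> def1 pl lt z UNIV"
  using def2_section[of S pl lt z UNIV a] by simp

lemma section_measure_residues: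
  assumes "S \<in> def2 pl lt z UNIV"
  obtains N where "0 < N"
    "\<And>a. section_measure S a = \<nu> (residues N (eventual_classes d N {b. (a, b) \<in> S}))"
proof -
  obtain N where "0 < N" and N: "\<forall>a. \<exists>c. periodic_beyond d N c {b. (a, b) \<in> S}"
    using def2_sections_periodic[OF assms] by blast
  have "section_measure S a = \<nu> (residues N (eventual_classes d N {b. (a, b) \<in> S}))" for a
    using N tail_measure_eq_residues[OF keisler_\<nu> \<nu>_tail section_in_def1[OF assms] \<open>0 < N\<close>]
    unfolding section_measure_def by blast
  with \<open>0 < N\<close> that show ?thesis by blast
qed

lemma section_measure_simple:
  assumes S: "S \<in> def2 pl lt z UNIV"
  shows "mu.simple_function (section_measure S)"
proof -
  obtain N where "0 < N"
    and N: "\<And>a. section_measure S a = \<nu> (residues N (eventual_classes d N {b. (a, b) \<in> S}))"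
    using section_measure_residues[OF S] by blast
  have classes: "eventual_classes d N D \<subseteq> {..<N}" for D
    by (auto simp: eventual_classes_def)
  have "range (section_measure S) \<subseteq> (\<lambda>K. \<nu> (residues N K)) ` Pow {..<N}"
    using N classes by auto
  then have "finite (range (section_measure S))"
    by (rule finite_subset) simp
  moreover have "section_measure S -` {r} \<in> def1 pl lt z UNIV" for r
  proof -
    have "section_measure S -` {r} =
        (\<Union>K\<in>{K\<in>Pow {..<N}. \<nu> (residues N K) = r}. {a. eventual_classes d N {b. (a, b) \<in> S} = K})"
      using N classes by auto
    also have "\<dots> \<in> def1 pl lt z UNIV"
      using def1_eventual_classes_eq[OF S \<open>0 < N\<close>] by (intro mu.finite_UN) auto
    finally show ?thesis .
  qed
  ultimately show ?thesis by (simp add: mu.simple_function_def)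
qed

definition product_measure :: "('u \<times> 'u) set \<Rightarrow> real" where
  "product_measure S = mu.simple_integral (section_measure S)"

lemma section_measure_UNIV: "section_measure UNIV = (\<lambda>_. 1)"
  by (simp add: fun_eq_iff section_measure_def)

lemma section_measure_cylinder_x: "section_measure (D \<times> UNIV) = (\<lambda>a. if a \<in> D then 1 else 0)"
  by (simp add: fun_eq_iff section_measure_def)

lemma section_measure_cylinder_y: "section_measure (UNIV \<times> D) = (\<lambda>_. \<nu> D)"
  by (simp add: fun_eq_iff section_measure_def)

lemma section_measure_dir_less: "section_measure {(a, b). dir_less lt d a b} = (\<lambda>_. 1)"
  by (simp add: fun_eq_iff section_measure_def \<nu>_tail)

lemma product_measure_keisler: "keisler (def2 pl lt z UNIV) product_measure"
  unfolding keisler_def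
proof (intro conjI ballI impI)
  fix S assume "S \<in> def2 pl lt z UNIV"
  then show "0 \<le> product_measure S"
    unfolding product_measure_def using section_in_def1
    by (intro mu.simple_integral_nonneg section_measure_simple) (auto simp: section_measure_def nu.measure_nonneg)
next
  show "product_measure UNIV = 1"
    by (simp add: product_measure_def section_measure_UNIV mu.simple_integral_const)
next
  fix S S' assume S: "S \<in> def2 pl lt z UNIV" and S': "S' \<in> def2 pl lt z UNIV" and "S \<inter> S' = {}"
  then have "section_measure (S \<union> S') = (\<lambda>a. section_measure S a + section_measure S' a)"
    unfolding section_measure_def
    using nu.measure_additive[OF section_in_def1[OF S] section_in_def1[OF S']]
    by (auto simp: fun_eq_iff Collect_disj_eq[symmetric] disjoint_iff)
  then show "product_measure (S \<union> S') = product_measure S + product_measure S'"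
    unfolding product_measure_def
    using mu.simple_integral_add[OF section_measure_simple[OF S] section_measure_simple[OF S']] by simp
qed

lemma product_measure_cylinder_x: "D \<in> def1 pl lt z UNIV \<Longrightarrow> product_measure (D \<times> UNIV) = \<mu> D"
  by (simp add: product_measure_def section_measure_cylinder_x mu.simple_integral_indicator)

lemma product_measure_cylinder_y: "product_measure (UNIV \<times> D) = \<nu> D"
  by (simp add: product_measure_def section_measure_cylinder_y mu.simple_integral_const)

lemma product_measure_dir_less: "product_measure {(a, b). dir_less lt d a b} = 1"
  by (simp add: product_measure_def section_measure_dir_less mu.simple_integral_const)

context
  fixes \<omega> :: "('u \<times> 'u) set \<Rightarrow> real"
  assumes \<omega>: "keisler (def2 pl lt z UNIV) \<omega>"
    and \<omega>_product: "\<And>S. S \<in> def2 pl lt z (range e) \<Longrightarrow> \<omega> S = product_measure S"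
    and \<omega>_x: "\<And>D. D \<in> def1 pl lt z UNIV \<Longrightarrow> \<omega> (D \<times> UNIV) = \<mu> D"
begin

interpretation omega: keisler_measure "def2 pl lt z UNIV" \<omega>
  by (rule keisler_measure_on_def2[OF UNIV_I \<omega>])

lemma extension_y_tail: "\<omega> (UNIV \<times> {y. dir_less lt d c y}) = 1"
proof -
  let ?G = "{(a, b). dir_less lt d a b}" and ?H = "{y. dir_less lt d c y}"
  have G: "?G \<in> def2 pl lt z UNIV" "\<omega> ?G = 1"
    using def2_dir_less[OF UNIV_I] \<omega>_product[OF def2_dir_less[OF rangeI]] product_measure_dir_less
    by simp_all
  have H: "?H \<times> UNIV \<in> def2 pl lt z UNIV" "\<omega> (?H \<times> UNIV) = 1"
    using def1_cylinder_x[OF def1_dir_less[OF UNIV_I]] \<omega>_x[OF def1_dir_less[OF UNIV_I]] \<mu>_tail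
    by simp_all
  have H': "UNIV \<times> ?H \<in> def2 pl lt z UNIV"
    by (rule def1_cylinder_y[OF def1_dir_less[OF UNIV_I]])
  have "1 = \<omega> (?G \<inter> (?H \<times> UNIV))"
    using G H omega.measure_Int_full by simp
  also have "\<dots> \<le> \<omega> (UNIV \<times> ?H)"
    using G H H' by (intro omega.measure_mono) (auto intro: dir_less_trans)
  finally show ?thesis
    using omega.measure_le_1[OF H'] by linarith
qed

lemma extension_marginal_y:
  assumes D: "D \<in> def1 pl lt z UNIV"
  shows "\<omega> (UNIV \<times> D) = \<nu> D"
proof -
  obtain N c where N: "0 < N" "periodic_beyond d N c D"
    using def1_periodic_beyond[OF D] by blast
  let ?R = "residues N (eventual_classes d N D)"
  have "finite (eventual_classes d N D)"
    by (rule finite_subset[of _ "{..<N}"]) (auto simp: eventual_classes_def)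
  then have R: "?R \<in> def1 pl lt z (range e)" by (rule residues_def1)
  have "\<omega> (UNIV \<times> D) = \<omega> (UNIV \<times> ?R)"
    using tail_measure_eq_residues[OF keisler_marginal_y[OF \<omega>] extension_y_tail D N] .
  also have "\<dots> = product_measure (UNIV \<times> ?R)"
    using def1_cylinder_y[OF R] by (rule \<omega>_product)
  also have "\<dots> = \<nu> ?R"
    by (rule product_measure_cylinder_y)
  also have "\<dots> = \<nu> D"
    using tail_measure_eq_residues[OF keisler_\<nu> \<nu>_tail D N] by simp
  finally show ?thesis .
qed

end

theorem geEZ: "geEZ pl lt z (range e) \<mu> \<nu>"
  unfolding geEZ_def
proof (intro exI[of _ product_measure] conjI ballI allI impI)
  show "keisler (def2 pl lt z (range e)) product_measure"
    using product_measure_keisler by (rule keisler_subalgebra) (unfold def2_def, blast)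
  show "product_measure (D \<times> UNIV) = \<mu> D" if "D \<in> def1 pl lt z (range e)" for D
    using def1_mono[OF that subset_UNIV] by (rule product_measure_cylinder_x)
  show "\<omega> (UNIV \<times> D) = \<nu> D"
    if "keisler (def2 pl lt z UNIV) \<omega>" "\<forall>S\<in>def2 pl lt z (range e). \<omega> S = product_measure S"
      "\<forall>D\<in>def1 pl lt z UNIV. \<omega> (D \<times> UNIV) = \<mu> D" "D \<in> def1 pl lt z UNIV" for \<omega> D
    by (rule extension_marginal_y) (use that in auto)
qed

end

theorem proposition6p3:
  fixes pl :: "'u \<Rightarrow> 'u \<Rightarrow> 'u" and lt :: "'u \<Rightarrow> 'u \<Rightarrow> bool" and z :: 'u
    and e :: "int \<Rightarrow> 'u" and \<mu> \<nu> :: "'u set \<Rightarrow> real"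
  assumes "elem_emb pl lt z e"
    and "saturated pl lt z"
    and "keisler (def1 pl lt z UNIV) \<mu>"
    and "keisler (def1 pl lt z UNIV) \<nu>"
  shows "((\<forall>b. \<mu> {a. lt b a} = 1 \<and> \<nu> {a. lt b a} = 1) \<longrightarrow> geEZ pl lt z (range e) \<mu> \<nu>)
       \<and> ((\<forall>b. \<mu> {a. lt a b} = 1 \<and> \<nu> {a. lt a b} = 1) \<longrightarrow> geEZ pl lt z (range e) \<mu> \<nu>)"
proof (intro conjI impI)
  assume tails: "\<forall>b. \<mu> {a. lt b a} = 1 \<and> \<nu> {a. lt b a} = 1"
  interpret tail_measures pl lt z e True \<mu> \<nu>
    by unfold_locales (use assms tails in \<open>simp_all add: dir_less_def\<close>)
  show "geEZ pl lt z (range e) \<mu> \<nu>" by (rule geEZ)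
next
  assume tails: "\<forall>b. \<mu> {a. lt a b} = 1 \<and> \<nu> {a. lt a b} = 1"
  interpret tail_measures pl lt z e False \<mu> \<nu>
    by unfold_locales (use assms tails in \<open>simp_all add: dir_less_def\<close>)
  show "geEZ pl lt z (range e) \<mu> \<nu>" by (rule geEZ)
qed

end
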